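(* Let $k\ge r\ge3$ and $m\ge0$ be integers. Let $\pi$ be a partition in $\mathbb{C}(k,r)$ with no odd parts, and let $N_2=N_2(\pi)$ be the number of parts marked $2$ in $GG(\pi)$. Then $\pi\in\mathbb{C}_{<}(k,r|m)$ if and only if $m\ge N_2$.
   Context: A partition $\pi=(\pi_1,\dots,\pi_\ell)$ is a finite non-increasing sequence of positive integers; "$a$ occurs in $\pi$" means $a=\pi_i$ for some $i$. Göllnitz–Gordon marking: $GG(\pi)$ assigns a positive integer (mark) to each part, processing the parts from smallest to largest; $\pi_i$ receives the smallest positive integer different from the marks of all parts $\pi_g$ with $g>i$ and $\pi_i-\pi_g\le 2$, where $\pi_i-\pi_g<2$ is required when $\pi_i$ is odd. An "$r$-marked part $a$" is a part equal to $a$ with mark $r$. $N_i(\pi)$ is the number of parts with mark $i$; $\pi^{(i)}_1\ge\dots\ge\pi^{(i)}_{N_i(\pi)}$ are the parts with mark $i$, with $\pi^{(i)}_0=+\infty$, $\pi^{(i)}_{N_i(\pi)+1}=-\infty$. $\mathbb{C}(k,r)$: partitions with (i) no odd part repeated; (ii) $\pi_i\ge\pi_{i+k-1}+2$ for $1\le i\le\ell-k+1$, strict if $\pi_i$ even; (iii) at most $r-1$ parts $\le 2$. Starting types: for $\pi\in\mathbb{C}(k,r)$ with $N_2=N_2(\pi)\ge1$, let $l$ be the largest integer in $\{0,\dots,N_2\}$ such that no odd part of $\pi$ is $\ge\pi^{(2)}_l$; for $l<i\le N_2$, $\pi^{(2)}_i$ has type $s_{-1}$. For $b=1,\dots,l$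 in increasing order, type and auxiliary $\sigma_b$: for $b=1$: Case 1: 1-marked part $\pi^{(2)}_1-1$ exists and $\pi^{(2)}_1+2$ does not occur: type $s_0$, $\sigma_1=\pi^{(2)}_1-1$; Case 2: 1-marked $\pi^{(2)}_1-2$ exists and $\pi^{(2)}_1+2$ does not occur: type $s_1$, $\sigma_1=\pi^{(2)}_1-2$; Case 3: 1-marked $\pi^{(2)}_1+2$ exists: type $s_2$, $\sigma_1=\pi^{(2)}_1+2$; Case 4: 1-marked $\pi^{(2)}_1$ exists: type $s_3$, $\sigma_1=\pi^{(2)}_1$. For $2\le b\le l$: Case 1: 1-marked $\pi^{(2)}_b-1$ exists and, if a 1-marked $\pi^{(2)}_b+2$ exists, $\sigma_{b-1}=\pi^{(2)}_b+2$: type $s_0$, $\sigma_b=\pi^{(2)}_b-1$; Case 2: same with $\pi^{(2)}_b-2$: type $s_1$, $\sigma_b=\pi^{(2)}_b-2$; Case 3: 1-marked $\pi^{(2)}_b+2$ exists and $\sigma_{b-1}\ne\pi^{(2)}_b+2$: type $s_2$, $\sigma_b=\pi^{(2)}_b+2$; Case 4: 1-marked $\pi^{(2)}_b$ exists: type $s_3$, $\sigma_b=\pi^{(2)}_b$. $\mathbb{C}_{<}(k,r|p,t)$ (for $p,t\ge 0$): the set of $\pi\in\mathbb{C}(k,r)$ such that (1) no odd part is $\ge 2t+1$; (2) $\pi^{(2)}_{p+1}<2t+1<\pi^{(2)}_p$ (in particular $p\le N_2(\pi)$); (3) if $\pi^{(2)}_p=2t+2$ then it is of starting type $s_2$ or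 $s_3$; (4) if $\pi^{(2)}_{p+1}=2t$ then it is of starting type $s_0$ or $s_1$. For $m\ge0$, $\mathbb{C}_{<}(k,r|m)=\bigcup_{p,t\ge0,\ p+t=m}\mathbb{C}_{<}(k,r|p,t)$. *)

theory Defs
  imports Main
begin

text \<open>A partition is a list of positive naturals in non-increasing order;
  list position j (0-based) holds the part pi_{j+1}.\<close>

definition is_partition :: "nat list \<Rightarrow> bool" where
  "is_partition pi \<longleftrightarrow> sorted_wrt (\<ge>) pi \<and> (\<forall>x\<in>set pi. 0 < x)"

text \<open>Goellnitz-Gordon marking. Parts are processed from smallest to largest;
  the accumulator holds (part, mark) pairs of the already processed (smaller-index-later) parts.\<close>

definition gg_step :: "(nat \<times> nat) list \<Rightarrow> nat \<Rightarrow> (nat \<times> nat) list" where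
  "gg_step acc x = acc @ [(x, LEAST r. 0 < r \<and>
      r \<notin> {m. \<exists>y. (y, m) \<in> set acc \<and> x - y \<le> 2 \<and> (odd x \<longrightarrow> x - y < 2)})]"

definition gg_marks :: "nat list \<Rightarrow> nat list" where
  "gg_marks pi = rev (map snd (foldl gg_step [] (rev pi)))"

definition marked_parts :: "nat list \<Rightarrow> nat \<Rightarrow> nat list" where
  "marked_parts pi i = [fst q. q \<leftarrow> zip pi (gg_marks pi), snd q = i]"

definition N_mark :: "nat list \<Rightarrow> nat \<Rightarrow> nat" where
  "N_mark pi i = length (marked_parts pi i)"

definition mpart :: "nat list \<Rightarrow> nat \<Rightarrow> nat \<Rightarrow> nat" where
  "mpart pi i j = marked_parts pi i ! (j - 1)"

definition has_marked :: "nat list \<Rightarrow> nat \<Rightarrow> nat \<Rightarrow> bool" where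
  "has_marked pi r a \<longleftrightarrow> (a, r) \<in> set (zip pi (gg_marks pi))"

definition in_C :: "nat \<Rightarrow> nat \<Rightarrow> nat list \<Rightarrow> bool" where
  "in_C k r pi \<longleftrightarrow> is_partition pi
     \<and> (\<forall>i j. i < length pi \<and> j < length pi \<and> i \<noteq> j \<and> odd (pi ! i) \<longrightarrow> pi ! i \<noteq> pi ! j)
     \<and> (\<forall>i. i + k - 1 < length pi \<longrightarrow>
           (if even (pi ! i) then pi ! i > pi ! (i + k - 1) + 2 else pi ! i \<ge> pi ! (i + k - 1) + 2))
     \<and> length (filter (\<lambda>x. x \<le> 2) pi) \<le> r - 1"

datatype stype = S_m1 | S0 | S1 | S2 | S3

text \<open>Starting type and auxiliary sigma_b for b = 1..l (computed recursively);
  cases are tried in the order 1,2,3,4. None if no case applies.\<close>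
fun start_info :: "nat list \<Rightarrow> nat \<Rightarrow> (stype \<times> nat) option" where
  "start_info pi 0 = None"
| "start_info pi (Suc b) =
    (let a = mpart pi 2 (Suc b); one = has_marked pi 1;
         occ = (\<lambda>x. x \<in> set pi) in
     if b = 0 then
       (if one (a - 1) \<and> \<not> occ (a + 2) then Some (S0, a - 1)
        else if one (a - 2) \<and> \<not> occ (a + 2) then Some (S1, a - 2)
        else if one (a + 2) then Some (S2, a + 2)
        else if one a then Some (S3, a)
        else None)
     else
       (case start_info pi b of
          None \<Rightarrow> None
        | Some (_, s) \<Rightarrow>
            (if one (a - 1) \<and> (one (a + 2) \<longrightarrow> s = a + 2) then Some (S0, a - 1)
             else if one (a - 2) \<and> (one (a + 2) \<longrightarrow> s = a + 2) then Some (S1, a - 2)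
             else if one (a + 2) \<and> s \<noteq> a + 2 then Some (S2, a + 2)
             else if one a then Some (S3, a)
             else None)))"

text \<open>The integer l: largest l in {0..N_2} with no odd part >= pi^{(2)}_l (pi^{(2)}_0 = infinity).\<close>
definition l_index :: "nat list \<Rightarrow> nat" where
  "l_index pi = (GREATEST l. l \<le> N_mark pi 2 \<and>
      (l = 0 \<or> (\<forall>x\<in>set pi. odd x \<longrightarrow> x < mpart pi 2 l)))"

definition start_type :: "nat list \<Rightarrow> nat \<Rightarrow> stype option" where
  "start_type pi b = (if l_index pi < b then Some S_m1 else map_option fst (start_info pi b))"

definition in_C_lt_pt :: "nat \<Rightarrow> nat \<Rightarrow> nat \<Rightarrow> nat \<Rightarrow> nat list \<Rightarrow> bool" where
  "in_C_lt_pt k r p t pi \<longleftrightarrow> in_C k r pi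
     \<and> (\<forall>x\<in>set pi. odd x \<longrightarrow> x < 2 * t + 1)
     \<and> p \<le> N_mark pi 2
     \<and> (p + 1 > N_mark pi 2 \<or> mpart pi 2 (p + 1) < 2 * t + 1)
     \<and> (p = 0 \<or> 2 * t + 1 < mpart pi 2 p)
     \<and> (1 \<le> p \<and> mpart pi 2 p = 2 * t + 2 \<longrightarrow> start_type pi p \<in> {Some S2, Some S3})
     \<and> (p + 1 \<le> N_mark pi 2 \<and> mpart pi 2 (p + 1) = 2 * t \<longrightarrow>
          start_type pi (p + 1) \<in> {Some S0, Some S1})"

definition in_C_lt :: "nat \<Rightarrow> nat \<Rightarrow> nat \<Rightarrow> nat list \<Rightarrow> bool" where
  "in_C_lt k r m pi \<longleftrightarrow> (\<exists>p t. p + t = m \<and> in_C_lt_pt k r p t pi)"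

end

theory Submission
  imports Defs
begin

(* Two parts with the same Goellnitz-Gordon mark differ by at least 2, and by more than 2
   when the larger one is even. Hence the 2-marked parts of any partition satisfy
   pi^(2)_j >= 2 (N_2 - j) + 1, so condition (2) for a pair (p, t) with p < N_2 forces
   N_2 <= p + t; this direction holds in all of C(k,r).
   Conversely, when all parts are even, every part a has a 1-marked part a or a - 2 and no
   1-marked part a - 1, so every 2-marked part gets one of the types s0,...,s3. Given m >= N_2,
   let p be the first index with pi^(2)_(p+1) < 2 (m - p) (or p = N_2). The pair (p, m - p)
   satisfies (1), (2) and (4); if it violates (3), then pi^(2)_p = 2 (m - p) + 2 has type s0 or
   s1, and the pair (p - 1, m - p + 1) works instead, because pi^(2)_(p-1) > pi^(2)_p + 2. *)

definition gg_conflict :: "nat \<Rightarrow> nat \<Rightarrow> bool" where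
  "gg_conflict x y \<longleftrightarrow> x - y \<le> 2 \<and> (odd x \<longrightarrow> x - y < 2)"

definition gg_mark :: "nat \<Rightarrow> (nat \<times> nat) list \<Rightarrow> nat" where
  "gg_mark x Z = (LEAST r. 0 < r \<and> r \<notin> {m. \<exists>y. (y, m) \<in> set Z \<and> gg_conflict x y})"

lemma gg_step_eq: "gg_step acc x = acc @ [(x, gg_mark x acc)]"
  by (simp add: gg_step_def gg_mark_def gg_conflict_def)

lemma gg_mark_not_conflict:
  assumes "(y, gg_mark x Z) \<in> set Z"
  shows "\<not> gg_conflict x y"
proof -
  let ?S = "{m. \<exists>y. (y, m) \<in> set Z \<and> gg_conflict x y}"
  obtain r where r: "r \<notin> insert 0 (snd ` set Z)"
    using ex_new_if_finite[OF infinite_UNIV_nat, of "insert 0 (snd ` set Z)"] by blast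
  have "?S \<subseteq> snd ` set Z"
    by (auto intro: rev_image_eqI)
  with r have "0 < r \<and> r \<notin> ?S"
    by auto
  then have "0 < gg_mark x Z \<and> gg_mark x Z \<notin> ?S"
    unfolding gg_mark_def by (rule LeastI)
  with assms show ?thesis
    by blast
qed

lemma gg_mark_eq_1:
  assumes "\<And>y. (y, 1) \<in> set Z \<Longrightarrow> \<not> gg_conflict x y"
  shows "gg_mark x Z = 1"
  unfolding gg_mark_def using assms by (intro Least_equality) auto

lemma map_fst_foldl_gg_step: "map fst (foldl gg_step acc ys) = map fst acc @ ys"
  by (induction ys arbitrary: acc) (simp_all add: gg_step_eq)

lemma foldl_gg_step_rev: "foldl gg_step [] (rev xs) = rev (zip xs (gg_marks xs))"
proof -
  let ?F = "foldl gg_step [] (rev xs)"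
  have fst_F: "map fst ?F = rev xs"
    by (simp add: map_fst_foldl_gg_step)
  then have "length (gg_marks xs) = length xs"
    unfolding gg_marks_def by (metis length_map length_rev)
  then have "rev (zip xs (gg_marks xs)) = zip (rev xs) (rev (gg_marks xs))"
    by (simp add: zip_rev)
  also have "\<dots> = zip (rev xs) (map snd ?F)"
    by (simp add: gg_marks_def)
  finally have "rev (zip xs (gg_marks xs)) = zip (rev xs) (map snd ?F)" .
  with fst_F show ?thesis
    by (metis zip_map_fst_snd)
qed

lemma gg_marks_Cons: "gg_marks (x # xs) = gg_mark x (zip xs (gg_marks xs)) # gg_marks xs"
proof -
  have mark: "gg_mark x (foldl gg_step [] (rev xs)) = gg_mark x (zip xs (gg_marks xs))"
    by (simp only: foldl_gg_step_rev) (simp add: gg_mark_def)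
  have marks: "rev (map snd (foldl gg_step [] (rev xs))) = gg_marks xs"
    by (simp add: gg_marks_def)
  show ?thesis
    unfolding gg_marks_def[of "x # xs"] by (simp add: gg_step_eq mark marks)
qed

lemma has_marked_Cons:
  "has_marked (x # xs) i a \<longleftrightarrow>
     (a = x \<and> i = gg_mark x (zip xs (gg_marks xs))) \<or> has_marked xs i a"
  by (auto simp: has_marked_def gg_marks_Cons)

lemma has_marked_in_set: "has_marked pi i a \<Longrightarrow> a \<in> set pi"
  by (auto simp: has_marked_def dest: set_zip_leftD)

lemma in_marked_parts_iff: "a \<in> set (marked_parts pi i) \<longleftrightarrow> has_marked pi i a"
  by (force simp: marked_parts_def has_marked_def)

lemma marked_parts_in_set: "a \<in> set (marked_parts pi i) \<Longrightarrow> a \<in> set pi"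
  by (simp add: in_marked_parts_iff has_marked_in_set)

lemma marked_parts_Cons:
  "marked_parts (x # xs) i =
     (if gg_mark x (zip xs (gg_marks xs)) = i then x # marked_parts xs i else marked_parts xs i)"
  by (simp add: marked_parts_def gg_marks_Cons)

lemma sorted_wrt_marked_parts:
  "sorted_wrt (\<lambda>a b. b + 2 \<le> a \<and> (even a \<longrightarrow> b + 2 < a)) (marked_parts pi i)"
proof (induction pi)
  case Nil
  then show ?case by (simp add: marked_parts_def)
next
  case (Cons x xs)
  have "b + 2 \<le> x \<and> (even x \<longrightarrow> b + 2 < x)"
    if "gg_mark x (zip xs (gg_marks xs)) = i" "b \<in> set (marked_parts xs i)" for b
    using that gg_mark_not_conflict[of b x "zip xs (gg_marks xs)"]
    by (auto simp: in_marked_parts_iff has_marked_def gg_conflict_def)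
  with Cons.IH show ?case
    by (simp add: marked_parts_Cons)
qed

lemma marked_parts_nth_gap:
  assumes "\<forall>x\<in>set pi. even x" and "i < j" and "j < length (marked_parts pi c)"
  shows "marked_parts pi c ! j + 2 < marked_parts pi c ! i"
proof -
  have "marked_parts pi c ! i \<in> set pi"
    using assms(2,3) by (intro marked_parts_in_set[OF nth_mem]) simp
  with assms(1) have "even (marked_parts pi c ! i)"
    by blast
  with sorted_wrt_nth_less[OF sorted_wrt_marked_parts assms(2,3)] show ?thesis
    by simp
qed

lemma sorted_wrt_gap_nth_lower_bound:
  assumes "sorted_wrt (\<lambda>a b. b + 2 \<le> a) xs" and "\<forall>x\<in>set xs. 0 < x" and "j < length xs"
  shows "2 * (length xs - j) \<le> xs ! j + 1"
  using assms
proof (induction xs arbitrary: j)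
  case Nil
  then show ?case by simp
next
  case (Cons x xs)
  show ?case
  proof (cases j)
    case 0
    show ?thesis
    proof (cases xs)
      case Nil
      with Cons.prems 0 show ?thesis by simp
    next
      case (Cons y ys)
      with Cons.IH[of 0] Cons.prems 0 show ?thesis by fastforce
    qed
  next
    case (Suc j')
    with Cons show ?thesis by simp
  qed
qed

lemma in_C_lt_imp_N_mark_le:
  assumes "in_C_lt k r m pi"
  shows "N_mark pi 2 \<le> m"
proof -
  obtain p t where m: "m = p + t" and pt: "in_C_lt_pt k r p t pi"
    using assms by (auto simp: in_C_lt_def)
  let ?A = "marked_parts pi 2"
  have p_le: "p \<le> length ?A"
    using pt by (simp add: in_C_lt_pt_def N_mark_def)
  show ?thesis
  proof (cases "p = length ?A")
    case False
    with p_le have p_less: "p < length ?A" by simp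
    with pt have "?A ! p < 2 * t + 1"
      by (simp add: in_C_lt_pt_def N_mark_def mpart_def)
    moreover have "2 * (length ?A - p) \<le> ?A ! p + 1"
    proof (rule sorted_wrt_gap_nth_lower_bound[OF _ _ p_less])
      show "sorted_wrt (\<lambda>a b. b + 2 \<le> a) ?A"
        using sorted_wrt_marked_parts by (rule sorted_wrt_mono_rel[rotated]) simp
      show "\<forall>x\<in>set ?A. 0 < x"
        using pt marked_parts_in_set by (auto simp: in_C_lt_pt_def in_C_def is_partition_def)
    qed
    ultimately show ?thesis
      by (simp add: m N_mark_def)
  qed (simp add: m N_mark_def)
qed

lemma has_marked_1_or_2_below:
  assumes "is_partition pi" and "\<forall>x\<in>set pi. even x" and "a \<in> set pi"
  shows "has_marked pi 1 a \<or> has_marked pi 1 (a - 2)"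
  using assms
proof (induction pi)
  case Nil
  then show ?case by simp
next
  case (Cons x xs)
  let ?Z = "zip xs (gg_marks xs)"
  show ?case
  proof (cases "a = x \<and> gg_mark x ?Z \<noteq> 1")
    case True
    then obtain y where y: "(y, 1) \<in> set ?Z" "gg_conflict x y"
      using gg_mark_eq_1 by blast
    from y(1) have "y \<in> set xs"
      by (rule set_zip_leftD)
    with Cons.prems have "y \<le> x" "even x" "even y"
      by (auto simp: is_partition_def)
    with y(2) have "y = x \<or> y = x - 2"
      unfolding gg_conflict_def by presburger
    moreover from y(1) have "has_marked xs 1 y"
      by (simp add: has_marked_def)
    ultimately show ?thesis
      using True by (auto simp: has_marked_Cons)
  next
    case False
    with Cons show ?thesis
      by (auto simp: has_marked_Cons is_partition_def)
  qed
qed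

lemma start_info_not_S_m1: "start_info pi b = Some (ty, s) \<Longrightarrow> ty \<noteq> S_m1"
  by (cases b) (auto simp: Let_def split: if_splits option.splits)

lemma start_info_defined:
  assumes "is_partition pi" and "\<forall>x\<in>set pi. even x"
    and "1 \<le> b" and "b \<le> N_mark pi 2"
  shows "start_info pi b \<noteq> None"
  using assms(3,4)
proof (induction b)
  case 0
  then show ?case by simp
next
  case (Suc b)
  define a where "a = mpart pi 2 (Suc b)"
  have "has_marked pi 2 a"
    using Suc.prems by (simp add: a_def mpart_def N_mark_def flip: in_marked_parts_iff)
  then have a_part: "a \<in> set pi"
    by (rule has_marked_in_set)
  with assms(1,2) have "even a" "0 < a"
    by (auto simp: is_partition_def)
  then have "odd (a - 1)"
    by simp
  with assms(2) have no_pred: "\<not> has_marked pi 1 (a - 1)"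
    using has_marked_in_set by blast
  have self: "has_marked pi 1 a \<or> has_marked pi 1 (a - 2)"
    using has_marked_1_or_2_below[OF assms(1,2) a_part] .
  have succ: "a + 2 \<in> set pi \<Longrightarrow> has_marked pi 1 (a + 2) \<or> has_marked pi 1 a"
    using has_marked_1_or_2_below[OF assms(1,2), of "a + 2"] by simp
  show ?case
  proof (cases "b = 0")
    case True
    then have "mpart pi 2 (Suc 0) = a"
      by (simp add: a_def)
    with True no_pred self succ show ?thesis
      by (auto simp: Let_def)
  next
    case False
    with Suc obtain ty s where "start_info pi b = Some (ty, s)"
      by fastforce
    with no_pred self False show ?thesis
      by (auto simp: Let_def a_def[symmetric])
  qed
qed

lemma l_index_no_odd_parts: "\<forall>x\<in>set pi. even x \<Longrightarrow> l_index pi = N_mark pi 2"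
  unfolding l_index_def by (rule Greatest_equality) auto

lemma start_type_no_odd_parts:
  assumes "is_partition pi" and "\<forall>x\<in>set pi. even x"
    and "1 \<le> b" and "b \<le> N_mark pi 2"
  shows "start_type pi b \<in> {Some S0, Some S1, Some S2, Some S3}"
proof -
  obtain ty s where info: "start_info pi b = Some (ty, s)"
    using start_info_defined[OF assms] by fastforce
  then have "ty \<noteq> S_m1"
    by (rule start_info_not_S_m1)
  with info assms(2,4) show ?thesis
    by (cases ty) (auto simp: start_type_def l_index_no_odd_parts)
qed

lemma in_C_lt_ptI:
  assumes "in_C k r pi" and "\<forall>x\<in>set pi. even x"
    and "p \<le> N_mark pi 2"
    and "p < N_mark pi 2 \<Longrightarrow> marked_parts pi 2 ! p \<le> 2 * t"
    and "p < N_mark pi 2 \<Longrightarrow> marked_parts pi 2 ! p = 2 * t \<Longrightarrow>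
           start_type pi (Suc p) \<in> {Some S0, Some S1}"
    and "0 < p \<Longrightarrow> 2 * t + 2 \<le> marked_parts pi 2 ! (p - 1)"
    and "0 < p \<Longrightarrow> marked_parts pi 2 ! (p - 1) = 2 * t + 2 \<Longrightarrow>
           start_type pi p \<in> {Some S2, Some S3}"
  shows "in_C_lt_pt k r p t pi"
  using assms unfolding in_C_lt_pt_def mpart_def
  by (cases "p < N_mark pi 2"; cases "0 < p") auto

lemma N_mark_le_imp_in_C_lt:
  assumes "N_mark pi 2 \<le> m" and "in_C k r pi" and even: "\<forall>x\<in>set pi. even x"
  shows "in_C_lt k r m pi"
proof -
  let ?A = "marked_parts pi 2"
  let ?N = "N_mark pi 2"
  have partition: "is_partition pi"
    using assms(2) by (simp add: in_C_def)
  define p where "p = (LEAST p. p = ?N \<or> ?A ! p < 2 * (m - p))"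
  have p_le: "p \<le> ?N"
    unfolding p_def by (rule Least_le) simp
  have below: "?A ! p < 2 * (m - p)" if "p < ?N"
    using LeastI[of "\<lambda>p. p = ?N \<or> ?A ! p < 2 * (m - p)" ?N] that by (simp add: p_def)
  have above: "2 * (m - p) + 2 \<le> ?A ! (p - 1)" if "0 < p"
  proof -
    from that have "p - 1 < p" by simp
    then have "\<not> (p - 1 = ?N \<or> ?A ! (p - 1) < 2 * (m - (p - 1)))"
      unfolding p_def by (rule not_less_Least)
    moreover have "m - (p - 1) = m - p + 1"
      using that p_le assms(1) by simp
    ultimately show ?thesis by linarith
  qed
  show ?thesis
  proof (cases "0 < p \<and> ?A ! (p - 1) = 2 * (m - p) + 2 \<and> start_type pi p \<notin> {Some S2, Some S3}")
    case False
    have "in_C_lt_pt k r p (m - p) pi"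
      using False below above by (intro in_C_lt_ptI[OF assms(2) even p_le]) (auto simp: less_imp_le)
    with p_le assms(1) show ?thesis
      unfolding in_C_lt_def by (intro exI[of _ p] exI[of _ "m - p"]) simp
  next
    case True
    then have "start_type pi (Suc (p - 1)) \<in> {Some S0, Some S1}"
      using start_type_no_odd_parts[OF partition even, of p] p_le by auto
    moreover have "2 * (m - p + 1) + 2 < ?A ! (p - 1 - 1)" if "0 < p - 1"
      using marked_parts_nth_gap[OF even, of "p - 1 - 1" "p - 1" 2] that p_le True
      by (simp add: N_mark_def)
    ultimately have "in_C_lt_pt k r (p - 1) (m - p + 1) pi"
      using True p_le by (intro in_C_lt_ptI[OF assms(2) even]) auto
    with True p_le assms(1) show ?thesis
      unfolding in_C_lt_def by (intro exI[of _ "p - 1"] exI[of _ "m - p + 1"]) simp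
  qed
qed

theorem theorem5p3:
  fixes k r m :: nat and pi :: "nat list"
  assumes "k \<ge> r" and "r \<ge> 3"
    and "in_C k r pi"
    and "\<forall>x\<in>set pi. even x"
  shows "in_C_lt k r m pi \<longleftrightarrow> m \<ge> N_mark pi 2"
  using in_C_lt_imp_N_mark_le N_mark_le_imp_in_C_lt[OF _ assms(3,4)] by blast

end
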